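(* Let $(\Omega,\mathcal E_\Omega,\mathbb P)$ be a probability space, $X_{1:T}$ data (a measurable map into $(\underline{\mathbf S}_T,\underline{\mathcal S}_T)$), $\Theta$ a Borel subset of $\mathbf R^p$, $U$ uniform on $[0,1]$ independent of the data, $\theta^*_T=H_T(X_{1:T})$ a proxy of $\theta_0\in\Theta$ with $H_T$ measurable, and $\theta^\bullet_T$ a generic proxy. Assume $\theta^\bullet_T$ is asymptotically normal: there exist a random vector $\xi^\bullet$ with $\xi^\bullet\sim\mathcal N(0,\Sigma^{1/2})$ and random vectors $R^\bullet_T=o_{\mathbb P}(T^{-1/2})$ such that $\theta^\bullet_T=\theta_0+\xi^\bullet/T^{1/2}+R^\bullet_T$. Let $\hat\Sigma_T$ be random matrices with $\hat\Sigma_T\to\Sigma$ in probability as $T\to\infty$, and let $\alpha\in(0,1)$. Then for every sub-$\sigma$-algebra $\mathcal E_T\subset\sigma(X_{1:T})$ and every $k\in\{1,\dots,p\}$: (i) $\displaystyle\lim_{T\to\infty}\mathbb E\Big\{\mathbb P\Big(\theta^\bullet_{T,k}\in\Big[\theta^*_{T,k}-\tfrac{\hat s_{T,k,k}}{\sqrt T}u_{1-\alpha/2},\ \theta^*_{T,k}-\tfrac{\hat s_{T,k,k}}{\sqrt T}u_{\alpha/2}\Big]\ \Big|\ \mathcal E_T\Big)\Big\}<1-\alpha$; (ii) $\displaystyle\lim_{T\to\infty}\mathbb E\Big\{\mathbb P\Big(\theta^\bullet_{T,k}\in\Big[\theta^*_{T,k}-\sqrt{\tfrac2T}\hat s_{T,k,k}u_{1-\alpha/2},\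 \theta^*_{T,k}-\sqrt{\tfrac2T}\hat s_{T,k,k}u_{\alpha/2}\Big]\ \Big|\ \mathcal E_T\Big)\Big\}=1-\alpha$, where $\theta^*_{T,k},\theta^\bullet_{T,k}$ are the $k$-th coordinates, $\hat s_{T,k,k}^2$ is the $k$-th diagonal entry of $\hat\Sigma_T$, and $u_{\beta}$ is the $\beta$-quantile of $\mathcal N(0,1)$.
   Context: A generic proxy $\theta^\bullet_T$ is a measurable map $\Omega\to\Theta$ that is independent of $X_{1:T}$ and has the same distribution as $\theta^*_T$. $\mathcal N(m,S)$ denotes the Gaussian distribution with mean $m$ and standard deviation (matrix square root of the covariance) $S$, so $\mathcal N(0,\Sigma^{1/2})$ has covariance $\Sigma$. *)

theory Defs
  imports "HOL-Probability.Probability"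
begin

definition std_gauss :: "real measure" where
  "std_gauss = density lborel std_normal_density"

definition std_gauss_vec :: "(real ^ 'n) measure" where
  "std_gauss_vec = distr (PiM UNIV (\<lambda>_::'n. std_gauss)) borel (\<lambda>f. \<chi> i. f i)"

text \<open>The paper's parametrisation: N(m,S) is the law of m + S Z, Z standard
  Gaussian, S the standard deviation (matrix square root of the covariance).\<close>
definition gauss_vec :: "real ^ 'n \<Rightarrow> real ^ 'n ^ 'n \<Rightarrow> (real ^ 'n) measure" where
  "gauss_vec m S = distr std_gauss_vec borel (\<lambda>z. m + S *v z)"

definition normal_quantile :: "real \<Rightarrow> real" where
  "normal_quantile \<beta> = (THE u. measure std_gauss {..u} = \<beta>)"

definition cond_prob :: "'a measure \<Rightarrow> 'a measure \<Rightarrow> 'a set \<Rightarrow> 'a \<Rightarrow> real" where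
  "cond_prob M F A = real_cond_exp M F (indicator A)"

definition conv_in_prob :: "'a measure \<Rightarrow> (nat \<Rightarrow> 'a \<Rightarrow> 'b::real_normed_vector) \<Rightarrow> ('a \<Rightarrow> 'b) \<Rightarrow> bool" where
  "conv_in_prob M Y Z \<longleftrightarrow>
     (\<forall>\<epsilon>>0. (\<lambda>T. measure M {\<omega>\<in>space M. norm (Y T \<omega> - Z \<omega>) > \<epsilon>}) \<longlonglongrightarrow> 0)"

end

theory Submission
  imports Defs
begin

text \<open>
  After centring at \<open>\<theta>\<^sub>0\<close> and scaling by \<open>\<surd>T\<close>, the \<open>k\<close>-th coordinate of the generic proxy
  converges in law to \<open>N(0, \<Sigma>\<^sub>k\<^sub>k)\<close>: its characteristic function is that of \<open>\<xi>\<^sub>k\<close> up to the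
  remainder, which is negligible in probability. The proxy computed from the data has the same law
  and is independent of the generic proxy, so their scaled difference has characteristic function
  \<open>\<phi>\<^sub>T(t) \<phi>\<^sub>T(-t) \<rightarrow> exp (-\<Sigma>\<^sub>k\<^sub>k t\<^sup>2)\<close>, i.e. it is asymptotically \<open>N(0, 2 \<Sigma>\<^sub>k\<^sub>k)\<close>: twice the variance
  the naive interval accounts for. A sandwich argument replaces \<open>\<Sigma>\<^sub>k\<^sub>k\<close> by its consistent
  estimate, and integrating a conditional probability gives back the unconditional one. Hence the
  naive interval covers with limit \<open>\<Phi>(u/\<surd>2) - \<Phi>(-u/\<surd>2) < 1 - \<alpha>\<close>, while widening it by \<open>\<surd>2\<close>
  restores \<open>1 - \<alpha>\<close>.
\<close>

section \<open>The standard Gaussian distribution\<close>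

lemma real_distribution_std_gauss: "real_distribution std_gauss"
  unfolding std_gauss_def by (rule real_dist_normal_dist)

interpretation SG: real_distribution std_gauss
  by (rule real_distribution_std_gauss)

lemma measure_std_gauss_Ioc_pos:
  assumes "x < y"
  shows "measure std_gauss {x<..y} > 0"
proof -
  define c where "c = std_normal_density (max \<bar>x\<bar> \<bar>y\<bar>)"
  have c: "c > 0" unfolding c_def by (simp add: normal_density_pos)
  have c_le: "c \<le> std_normal_density z" if "z \<in> {x<..y}" for z
  proof -
    have "\<bar>z\<bar> \<le> max \<bar>x\<bar> \<bar>y\<bar>" using that by auto
    then have "z\<^sup>2 \<le> (max \<bar>x\<bar> \<bar>y\<bar>)\<^sup>2" by (metis abs_ge_zero power2_abs power_mono)
    then show ?thesis unfolding c_def normal_density_def by (intro mult_left_mono) auto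
  qed
  have "ennreal (c * (y - x)) = (\<integral>\<^sup>+ z. ennreal c * indicator {x<..y} z \<partial>lborel)"
    using assms c by (simp add: nn_integral_cmult_indicator ennreal_mult)
  also have "\<dots> \<le> (\<integral>\<^sup>+ z. ennreal (std_normal_density z) * indicator {x<..y} z \<partial>lborel)"
    by (intro nn_integral_mono) (auto simp: indicator_def c_le)
  also have "\<dots> = emeasure std_gauss {x<..y}"
    unfolding std_gauss_def by (subst emeasure_density) auto
  finally have "ennreal (c * (y - x)) \<le> ennreal (measure std_gauss {x<..y})"
    by (simp add: SG.emeasure_eq_measure)
  then have "c * (y - x) \<le> measure std_gauss {x<..y}"
    by (simp add: ennreal_le_iff)
  moreover have "c * (y - x) > 0" using c assms by simp
  ultimately show ?thesis by linarith
qed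

lemma measure_std_gauss_singleton: "measure std_gauss {x} = 0"
proof -
  have "emeasure std_gauss {x} = (\<integral>\<^sup>+ y. ennreal (std_normal_density y) * indicator {x} y \<partial>lborel)"
    unfolding std_gauss_def by (subst emeasure_density) auto
  also have "\<dots> = 0"
    by (subst nn_integral_0_iff_AE) (auto intro!: AE_I[where N="{x}"] simp: indicator_def)
  finally show ?thesis by (simp add: measure_def)
qed

lemma char_std_gauss: "char std_gauss t = complex_of_real (exp (- t\<^sup>2 / 2))"
  unfolding std_gauss_def by (simp add: char_std_normal_distribution)

lemma isCont_cdf_std_gauss: "isCont (cdf std_gauss) x"
  using SG.isCont_cdf measure_std_gauss_singleton by simp

lemma cdf_std_gauss_strict_mono: "x < y \<Longrightarrow> cdf std_gauss x < cdf std_gauss y"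
  using SG.cdf_diff_eq[of x y] measure_std_gauss_Ioc_pos[of x y] by simp

lemma cdf_std_gauss_less_iff: "cdf std_gauss x < cdf std_gauss y \<longleftrightarrow> x < y"
  by (metis cdf_std_gauss_strict_mono linorder_neq_iff order_less_asym)

lemma cdf_std_gauss_inject: "cdf std_gauss x = cdf std_gauss y \<longleftrightarrow> x = y"
  by (metis cdf_std_gauss_less_iff linorder_neq_iff order_less_irrefl)

lemma char_distr_scale:
  assumes "real_distribution N"
  shows "char (distr N borel (\<lambda>x. c * x)) t = char N (c * t)"
proof -
  interpret real_distribution N by fact
  show ?thesis unfolding char_def
    by (subst integral_distr) (auto simp: ac_simps)
qed

lemma distr_std_gauss_uminus: "distr std_gauss borel uminus = std_gauss"
proof -
  have "distr std_gauss borel uminus = distr std_gauss borel (\<lambda>x. (-1) * x)" by simp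
  moreover have "real_distribution (distr std_gauss borel (\<lambda>x. (-1) * x))"
    by (rule SG.real_distribution_distr) simp
  moreover have "char (distr std_gauss borel (\<lambda>x. (-1) * x)) = char std_gauss"
    by (rule ext, subst char_distr_scale[OF real_distribution_std_gauss]) (simp add: char_std_gauss)
  ultimately show ?thesis using Levy_uniqueness real_distribution_std_gauss by metis
qed

lemma cdf_std_gauss_uminus: "cdf std_gauss (- x) = 1 - cdf std_gauss x"
proof -
  have "cdf std_gauss (- x) = measure (distr std_gauss borel uminus) {..-x}"
    by (simp add: distr_std_gauss_uminus cdf_def)
  also have "\<dots> = measure std_gauss (UNIV - ({..x} - {x}))"
    by (subst measure_distr) (auto intro!: arg_cong[where f="measure std_gauss"])
  also have "\<dots> = 1 - cdf std_gauss x"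
    using SG.prob_compl[of "{..x} - {x}"] SG.finite_measure_Diff[of "{..x}" "{x}"]
      measure_std_gauss_singleton by (simp add: cdf_def)
  finally show ?thesis .
qed

lemma cdf_std_gauss_normal_quantile:
  assumes "0 < \<beta>" "\<beta> < 1"
  shows "cdf std_gauss (normal_quantile \<beta>) = \<beta>"
proof -
  obtain a where a: "cdf std_gauss a < \<beta>"
    using eventually_happens'[OF _ order_tendstoD(2)[OF SG.cdf_lim_at_bot assms(1)]] by auto
  obtain b where b: "cdf std_gauss b > \<beta>"
    using eventually_happens'[OF _ order_tendstoD(1)[OF SG.cdf_lim_at_top_prob assms(2)]] by auto
  have "a \<le> b" using a b cdf_std_gauss_less_iff[of a b] by linarith
  then obtain u where u: "cdf std_gauss u = \<beta>"
    using IVT[of "cdf std_gauss" a \<beta> b] a b isCont_cdf_std_gauss by fastforce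
  have "normal_quantile \<beta> = u"
    unfolding normal_quantile_def
  proof (rule the_equality)
    show "measure std_gauss {..u} = \<beta>" using u by (simp add: cdf_def)
    fix v assume "measure std_gauss {..v} = \<beta>"
    then have "cdf std_gauss v = cdf std_gauss u" using u by (simp add: cdf_def)
    then show "v = u" by (simp only: cdf_std_gauss_inject)
  qed
  then show ?thesis using u by simp
qed

lemma normal_quantile_one_minus:
  assumes "0 < \<beta>" "\<beta> < 1"
  shows "normal_quantile (1 - \<beta>) = - normal_quantile \<beta>"
proof -
  have "cdf std_gauss (normal_quantile (1 - \<beta>)) = cdf std_gauss (- normal_quantile \<beta>)"
    using assms by (simp add: cdf_std_gauss_normal_quantile cdf_std_gauss_uminus)
  then show ?thesis by (simp only: cdf_std_gauss_inject)
qed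

lemma normal_quantile_pos:
  assumes "1/2 < \<beta>" "\<beta> < 1"
  shows "0 < normal_quantile \<beta>"
proof -
  have "cdf std_gauss 0 < cdf std_gauss (normal_quantile \<beta>)"
    using assms cdf_std_gauss_uminus[of 0] by (simp add: cdf_std_gauss_normal_quantile)
  then show ?thesis by (simp only: cdf_std_gauss_less_iff)
qed

lemma borel_measurable_vec_lambda:
  fixes N :: "real measure"
  assumes "sets N = sets borel"
  shows "(\<lambda>f. \<chi> i. f i) \<in> borel_measurable (PiM (UNIV::'n::finite set) (\<lambda>_. N))"
proof (rule borel_measurable_euclidean_space[THEN iffD2], intro ballI)
  fix b :: "real^'n" assume "b \<in> Basis"
  then obtain i where "b = axis i 1" unfolding Basis_vec_def by auto
  then have "(\<lambda>f. (\<chi> i. f i) \<bullet> b) = (\<lambda>f. f i)" by (simp add: inner_axis)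
  then show "(\<lambda>f. (\<chi> i. f i) \<bullet> b) \<in> borel_measurable (PiM UNIV (\<lambda>_. N))"
    using measurable_component_singleton[of i UNIV "\<lambda>_. N", OF UNIV_I]
    unfolding measurable_cong_sets[OF refl assms] by simp
qed

lemma borel_measurable_vec_nth [measurable (raw)]:
  fixes f :: "'a \<Rightarrow> 'b::real_normed_vector^'n"
  assumes "f \<in> borel_measurable M"
  shows "(\<lambda>x. f x $ i) \<in> borel_measurable M"
proof -
  have "(\<lambda>x::'b^'n. x $ i) \<in> borel_measurable borel"
    by (intro borel_measurable_continuous_onI continuous_intros)
  then show ?thesis by (rule measurable_compose[OF assms])
qed

lemma char_gauss_vec_component:
  fixes S :: "real^'n^'n"
  shows "char (distr (gauss_vec 0 S) borel (\<lambda>v. v $ k)) t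
     = complex_of_real (exp (- ((S ** transpose S) $ k $ k * t\<^sup>2) / 2))"
proof -
  interpret product_sigma_finite "\<lambda>_::'n. std_gauss"
    unfolding product_sigma_finite_def by (auto intro: SG.sigma_finite_measure_axioms)
  have [measurable]: "(\<lambda>z. S *v z) \<in> borel_measurable borel"
    by (intro borel_measurable_continuous_onI linear_continuous_on)
      (simp add: linear_conv_bounded_linear[symmetric] matrix_vector_mul_linear)
  note borel_measurable_vec_lambda[of std_gauss, simplified std_gauss_def, measurable]
  have "char (distr (gauss_vec 0 S) borel (\<lambda>v. v $ k)) t
      = (\<integral>f. iexp (t * (S *v (\<chi> i. f i)) $ k) \<partial>PiM UNIV (\<lambda>_. std_gauss))"
    unfolding char_def gauss_vec_def std_gauss_vec_def
    by (subst integral_distr, measurable)+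
  also have "\<dots> = (\<integral>f. (\<Prod>j\<in>UNIV. iexp ((t * S$k$j) * f j)) \<partial>PiM UNIV (\<lambda>_. std_gauss))"
    by (simp add: matrix_vector_mult_def sum_distrib_left mult.assoc exp_sum)
  also have "\<dots> = (\<Prod>j\<in>UNIV. char std_gauss (t * S$k$j))"
    unfolding char_def by (rule product_integral_prod) (auto intro!: SG.integrable_iexp)
  also have "\<dots> = complex_of_real (exp (\<Sum>j\<in>UNIV. - (t * S$k$j)\<^sup>2 / 2))"
    by (simp add: char_std_gauss exp_sum)
  also have "(\<Sum>j\<in>UNIV. - (t * S$k$j)\<^sup>2 / 2) = - ((\<Sum>j\<in>UNIV. (S$k$j)\<^sup>2) * t\<^sup>2) / 2"
    by (simp add: sum_negf power_mult_distrib sum_distrib_left mult.commute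
        flip: sum_divide_distrib)
  also have "(\<Sum>j\<in>UNIV. (S$k$j)\<^sup>2) = (S ** transpose S) $ k $ k"
    by (simp add: matrix_matrix_mult_def transpose_def power2_eq_square)
  finally show ?thesis .
qed

section \<open>Convergence in probability and characteristic functions\<close>

lemma (in finite_measure) conv_in_prob_compose_const:
  fixes A :: "nat \<Rightarrow> 'a \<Rightarrow> 'b::{second_countable_topology, real_normed_vector}"
    and f :: "'b \<Rightarrow> 'c::{second_countable_topology, real_normed_vector}"
  assumes [measurable]: "\<And>T. A T \<in> borel_measurable M" "f \<in> borel_measurable borel"
    and f: "isCont f c" and A: "conv_in_prob M A (\<lambda>_. c)"
  shows "conv_in_prob M (\<lambda>T \<omega>. f (A T \<omega>)) (\<lambda>_. f c)"
  unfolding conv_in_prob_def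
proof (intro allI impI)
  fix \<epsilon> :: real assume "\<epsilon> > 0"
  then obtain \<delta> where "\<delta> > 0" and \<delta>: "\<And>x. norm (x - c) < \<delta> \<Longrightarrow> norm (f x - f c) < \<epsilon>"
    using f unfolding continuous_at_eps_delta dist_norm by blast
  have lim: "(\<lambda>T. measure M {\<omega>\<in>space M. \<delta> / 2 < norm (A T \<omega> - c)}) \<longlonglongrightarrow> 0"
    using A half_gt_zero[OF \<open>\<delta> > 0\<close>] unfolding conv_in_prob_def by blast
  have "measure M {\<omega>\<in>space M. \<epsilon> < norm (f (A T \<omega>) - f c)}
      \<le> measure M {\<omega>\<in>space M. \<delta> / 2 < norm (A T \<omega> - c)}" for T
  proof (rule finite_measure_mono)
    show "{\<omega>\<in>space M. \<delta> / 2 < norm (A T \<omega> - c)} \<in> sets M" by measurable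
    show "{\<omega>\<in>space M. \<epsilon> < norm (f (A T \<omega>) - f c)} \<subseteq> {\<omega>\<in>space M. \<delta> / 2 < norm (A T \<omega> - c)}"
    proof
      fix \<omega> assume \<omega>: "\<omega> \<in> {\<omega>\<in>space M. \<epsilon> < norm (f (A T \<omega>) - f c)}"
      then have "\<not> norm (A T \<omega> - c) < \<delta>" using \<delta>[of "A T \<omega>"] by auto
      then show "\<omega> \<in> {\<omega>\<in>space M. \<delta> / 2 < norm (A T \<omega> - c)}" using \<omega> \<open>\<delta> > 0\<close> by auto
    qed
  qed
  then show "(\<lambda>T. measure M {\<omega>\<in>space M. \<epsilon> < norm (f (A T \<omega>) - f c)}) \<longlonglongrightarrow> 0"
    by (intro tendsto_sandwich[OF _ _ tendsto_const lim]) auto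
qed

lemma norm_iexp_add_diff_le: "norm (iexp (t * (z + r)) - iexp (t * z)) \<le> min \<bar>t * r\<bar> 2"
proof -
  have "iexp (t * (z + r)) - iexp (t * z) = iexp (t * z) * (iexp (t * r) - 1)"
    by (simp add: algebra_simps exp_add[symmetric])
  then have "norm (iexp (t * (z + r)) - iexp (t * z)) = norm (iexp (t * r) - 1)"
    by (simp add: norm_mult norm_exp_i_times)
  also have "\<dots> \<le> min \<bar>t * r\<bar> 2"
    using iexp_approx1[of "t * r" 0] norm_triangle_ineq4[of "iexp (t * r)" 1]
    by (simp add: norm_exp_i_times)
  finally show ?thesis .
qed

lemma (in prob_space) norm_char_distr_add_le:
  fixes Z r :: "'a \<Rightarrow> real"
  assumes [measurable]: "Z \<in> borel_measurable M" "r \<in> borel_measurable M" and "\<epsilon> \<ge> 0"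
  shows "norm (char (distr M borel (\<lambda>\<omega>. Z \<omega> + r \<omega>)) t - char (distr M borel Z) t)
    \<le> \<bar>t\<bar> * \<epsilon> + 2 * prob {\<omega>\<in>space M. \<epsilon> < \<bar>r \<omega>\<bar>}"
proof -
  define B where "B = {\<omega>\<in>space M. \<epsilon> < \<bar>r \<omega>\<bar>}"
  have [measurable]: "B \<in> events" unfolding B_def by measurable
  have pointwise: "norm (iexp (t * (Z \<omega> + r \<omega>)) - iexp (t * Z \<omega>)) \<le> \<bar>t\<bar> * \<epsilon> + 2 * indicator B \<omega>"
    if "\<omega> \<in> space M" for \<omega>
  proof -
    have "norm (iexp (t * (Z \<omega> + r \<omega>)) - iexp (t * Z \<omega>)) \<le> min \<bar>t * r \<omega>\<bar> 2"
      by (rule norm_iexp_add_diff_le)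
    also have "\<dots> \<le> \<bar>t\<bar> * \<epsilon> + 2 * indicator B \<omega>"
    proof (cases "\<omega> \<in> B")
      case True
      have "0 \<le> \<bar>t\<bar> * \<epsilon>" using \<open>\<epsilon> \<ge> 0\<close> by simp
      then show ?thesis using True by (simp add: min_le_iff_disj)
    next
      case False
      then have "\<bar>t * r \<omega>\<bar> \<le> \<bar>t\<bar> * \<epsilon>" using that by (simp add: B_def abs_mult mult_left_mono)
      then show ?thesis using False by simp
    qed
    finally show ?thesis .
  qed
  have "norm (char (distr M borel (\<lambda>\<omega>. Z \<omega> + r \<omega>)) t - char (distr M borel Z) t)
      = norm (\<integral>\<omega>. iexp (t * (Z \<omega> + r \<omega>)) - iexp (t * Z \<omega>) \<partial>M)"
    unfolding char_def
    by (simp add: integral_distr Bochner_Integration.integral_diff integrable_iexp)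
  also have "\<dots> \<le> (\<integral>\<omega>. norm (iexp (t * (Z \<omega> + r \<omega>)) - iexp (t * Z \<omega>)) \<partial>M)"
    by (rule integral_norm_bound)
  also have "\<dots> \<le> (\<integral>\<omega>. \<bar>t\<bar> * \<epsilon> + 2 * indicator B \<omega> \<partial>M)"
    using pointwise
    by (intro integral_mono)
      (auto intro!: Bochner_Integration.integrable_diff Bochner_Integration.integrable_add
        integrable_iexp integrable_mult_right integrable_real_indicator simp: emeasure_eq_measure)
  also have "\<dots> = \<bar>t\<bar> * \<epsilon> + 2 * prob B"
    by (subst Bochner_Integration.integral_add)
      (auto intro!: integrable_mult_right integrable_real_indicator simp: emeasure_eq_measure prob_space)
  finally show ?thesis unfolding B_def .
qed

lemma (in prob_space) tendsto_char_distr_if_conv_in_prob_zero: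
  fixes Z :: "'a \<Rightarrow> real" and r Y :: "nat \<Rightarrow> 'a \<Rightarrow> real"
  assumes [measurable]: "Z \<in> borel_measurable M" "\<And>T. r T \<in> borel_measurable M"
    and r: "conv_in_prob M r (\<lambda>_. 0)"
    and Y: "eventually (\<lambda>T. \<forall>\<omega>\<in>space M. Y T \<omega> = Z \<omega> + r T \<omega>) sequentially"
  shows "(\<lambda>T. char (distr M borel (Y T)) t) \<longlonglongrightarrow> char (distr M borel Z) t"
proof (rule Lim_transform_eventually)
  show "\<forall>\<^sub>F T in sequentially. char (distr M borel (\<lambda>\<omega>. Z \<omega> + r T \<omega>)) t = char (distr M borel (Y T)) t"
    using Y by eventually_elim (simp cong: distr_cong)
  show "(\<lambda>T. char (distr M borel (\<lambda>\<omega>. Z \<omega> + r T \<omega>)) t) \<longlonglongrightarrow> char (distr M borel Z) t"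
  proof (rule tendstoI)
    fix e :: real assume "e > 0"
    define \<epsilon> where "\<epsilon> = e / (2 * (\<bar>t\<bar> + 1))"
    have "\<epsilon> > 0" "\<bar>t\<bar> * \<epsilon> < e / 2"
      using \<open>e > 0\<close> by (auto simp: \<epsilon>_def field_simps)
    have "(\<lambda>T. prob {\<omega>\<in>space M. \<epsilon> < \<bar>r T \<omega>\<bar>}) \<longlonglongrightarrow> 0"
      using r \<open>\<epsilon> > 0\<close> unfolding conv_in_prob_def by simp
    then have "eventually (\<lambda>T. prob {\<omega>\<in>space M. \<epsilon> < \<bar>r T \<omega>\<bar>} < e / 4) sequentially"
      by (rule order_tendstoD(2)) (use \<open>e > 0\<close> in simp)
    then show "\<forall>\<^sub>F T in sequentially. dist (char (distr M borel (\<lambda>\<omega>. Z \<omega> + r T \<omega>)) t) (char (distr M borel Z) t) < e"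
    proof eventually_elim
      case (elim T)
      then show ?case
        using norm_char_distr_add_le[of Z "r T" \<epsilon> t] \<open>\<epsilon> > 0\<close> \<open>\<bar>t\<bar> * \<epsilon> < e / 2\<close>
        by (simp add: dist_norm)
    qed
  qed
qed

lemma (in prob_space) tendsto_char_if_asymptotically_gauss_vec:
  fixes \<theta> R :: "nat \<Rightarrow> 'a \<Rightarrow> real^'n" and \<xi> :: "'a \<Rightarrow> real^'n"
  assumes [measurable]: "\<xi> \<in> borel_measurable M" "\<And>T. R T \<in> borel_measurable M"
    and \<xi>: "distr M borel \<xi> = gauss_vec 0 S"
    and R: "conv_in_prob M (\<lambda>T \<omega>. sqrt (real T) *\<^sub>R R T \<omega>) (\<lambda>\<omega>. 0)"
    and \<theta>: "\<And>T \<omega>. T \<ge> 1 \<Longrightarrow> \<omega> \<in> space M \<Longrightarrow> \<theta> T \<omega> = \<theta>0 + (1 / sqrt (real T)) *\<^sub>R \<xi> \<omega> + R T \<omega>"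
  shows "(\<lambda>T. char (distr M borel (\<lambda>\<omega>. sqrt (real T) * (\<theta> T \<omega> $ k - \<theta>0 $ k))) t)
    \<longlonglongrightarrow> complex_of_real (exp (- ((S ** transpose S) $ k $ k * t\<^sup>2) / 2))"
proof -
  have "conv_in_prob M (\<lambda>T \<omega>. (sqrt (real T) *\<^sub>R R T \<omega>) $ k) (\<lambda>\<omega>. 0 $ k)"
    by (rule conv_in_prob_compose_const[OF _ _ _ R]) (auto intro: continuous_intros)
  then have R_k: "conv_in_prob M (\<lambda>T \<omega>. sqrt (real T) * R T \<omega> $ k) (\<lambda>\<omega>. 0)"
    by simp
  have "(\<lambda>T. char (distr M borel (\<lambda>\<omega>. sqrt (real T) * (\<theta> T \<omega> $ k - \<theta>0 $ k))) t)
      \<longlonglongrightarrow> char (distr M borel (\<lambda>\<omega>. \<xi> \<omega> $ k)) t"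
  proof (rule tendsto_char_distr_if_conv_in_prob_zero[OF _ _ R_k])
    show "(\<lambda>\<omega>. \<xi> \<omega> $ k) \<in> borel_measurable M" by measurable
    show "(\<lambda>\<omega>. sqrt (real T) * R T \<omega> $ k) \<in> borel_measurable M" for T by measurable
    show "\<forall>\<^sub>F T in sequentially. \<forall>\<omega>\<in>space M.
        sqrt (real T) * (\<theta> T \<omega> $ k - \<theta>0 $ k) = \<xi> \<omega> $ k + sqrt (real T) * R T \<omega> $ k"
      unfolding eventually_sequentially
      by (intro exI[of _ 1] allI impI ballI) (simp add: \<theta> algebra_simps)
  qed
  also have "char (distr M borel (\<lambda>\<omega>. \<xi> \<omega> $ k)) t = char (distr (gauss_vec 0 S) borel (\<lambda>v. v $ k)) t"
    unfolding \<xi>[symmetric] by (subst distr_distr) (auto simp: comp_def)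
  finally show ?thesis
    by (simp add: char_gauss_vec_component)
qed

lemma (in prob_space) tendsto_prob_le_if_tendsto_char_gauss:
  fixes W :: "nat \<Rightarrow> 'a \<Rightarrow> real"
  assumes [measurable]: "\<And>T. W T \<in> borel_measurable M" and "c > 0"
    and char: "\<And>t. (\<lambda>T. char (distr M borel (W T)) t) \<longlonglongrightarrow> complex_of_real (exp (- (c * t)\<^sup>2 / 2))"
  shows "(\<lambda>T. prob {\<omega>\<in>space M. W T \<omega> \<le> x}) \<longlonglongrightarrow> cdf std_gauss (x / c)"
proof -
  define N where "N = distr std_gauss borel (\<lambda>y. c * y)"
  have N: "real_distribution N" unfolding N_def by (rule SG.real_distribution_distr) simp
  have weak: "weak_conv_m (\<lambda>T. distr M borel (W T)) N"
  proof (rule levy_continuity)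
    show "real_distribution (distr M borel (W T))" for T by (rule real_distribution_distr) simp
    show "real_distribution N" by (rule N)
    show "(\<lambda>T. char (distr M borel (W T)) t) \<longlonglongrightarrow> char N t" for t
      using char[of t] unfolding N_def char_distr_scale[OF real_distribution_std_gauss]
      by (simp add: char_std_gauss)
  qed
  have cdf_N: "cdf N = (\<lambda>y. cdf std_gauss (y / c))"
  proof
    fix y
    have "(\<lambda>z. c * z) -` {..y} \<inter> space std_gauss = {..y / c}"
      using \<open>c > 0\<close> by (auto simp: field_simps)
    then show "cdf N y = cdf std_gauss (y / c)"
      unfolding N_def cdf_def by (subst measure_distr) auto
  qed
  have "isCont (cdf N) x"
    unfolding cdf_N using \<open>c > 0\<close>
    by (intro continuous_intros isCont_o2[OF _ isCont_cdf_std_gauss]) simp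
  then have "(\<lambda>T. cdf (distr M borel (W T)) x) \<longlonglongrightarrow> cdf N x"
    using weak unfolding weak_conv_m_def weak_conv_def by blast
  moreover have "cdf (distr M borel (W T)) x = prob {\<omega>\<in>space M. W T \<omega> \<le> x}" for T
    unfolding cdf_def by (subst measure_distr) (auto intro!: arg_cong[where f=prob])
  ultimately show ?thesis
    by (simp add: cdf_N)
qed

lemma (in prob_space) char_distr_diff_indep_identical:
  fixes Y Y' :: "'a \<Rightarrow> real"
  assumes indep: "indep_var borel Y' borel Y" and same: "distr M borel Y = distr M borel Y'"
  shows "char (distr M borel (\<lambda>\<omega>. Y \<omega> - Y' \<omega>)) t
    = char (distr M borel Y) t * char (distr M borel Y) (- t)"
proof -
  have [measurable]: "Y' \<in> borel_measurable M" "Y \<in> borel_measurable M"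
    using indep by (auto dest: indep_var_rv1 indep_var_rv2)
  have "indep_var borel (uminus \<circ> Y') borel (id \<circ> Y)"
    by (rule indep_var_compose[OF indep]) auto
  then have "char (distr M borel (\<lambda>\<omega>. - Y' \<omega> + Y \<omega>)) t
      = char (distr M borel (\<lambda>\<omega>. - Y' \<omega>)) t * char (distr M borel Y) t"
    by (intro char_distr_add) (simp add: comp_def)
  moreover have "char (distr M borel (\<lambda>\<omega>. - Y' \<omega>)) t = char (distr M borel Y) (- t)"
    unfolding same char_def by (simp add: integral_distr)
  ultimately show ?thesis by (simp add: mult.commute)
qed

section \<open>Intervals with a consistently estimated scale\<close>

lemma tendsto_of_approximating_bounds:
  fixes f :: "nat \<Rightarrow> real" and lo up :: "'d \<Rightarrow> nat \<Rightarrow> real"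
  assumes "F \<noteq> bot" and P: "eventually P F"
    and bounds: "\<And>\<delta>. P \<delta> \<Longrightarrow> eventually (\<lambda>T. lo \<delta> T \<le> f T \<and> f T \<le> up \<delta> T) sequentially"
    and lo: "\<And>\<delta>. P \<delta> \<Longrightarrow> lo \<delta> \<longlonglongrightarrow> l \<delta>" and up: "\<And>\<delta>. P \<delta> \<Longrightarrow> up \<delta> \<longlonglongrightarrow> u \<delta>"
    and l: "(l \<longlongrightarrow> L) F" and u: "(u \<longlongrightarrow> L) F"
  shows "f \<longlonglongrightarrow> L"
proof (rule tendstoI)
  fix e :: real assume "e > 0"
  then have "eventually (\<lambda>\<delta>. P \<delta> \<and> dist (l \<delta>) L < e / 2 \<and> dist (u \<delta>) L < e / 2) F"
    by (intro eventually_conj P tendstoD[OF l] tendstoD[OF u]) simp_all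
  then obtain \<delta> where \<delta>: "P \<delta>" "dist (l \<delta>) L < e / 2" "dist (u \<delta>) L < e / 2"
    using eventually_happens'[OF \<open>F \<noteq> bot\<close>] by blast
  have "eventually (\<lambda>T. (lo \<delta> T \<le> f T \<and> f T \<le> up \<delta> T)
      \<and> dist (lo \<delta> T) (l \<delta>) < e / 2 \<and> dist (up \<delta> T) (u \<delta>) < e / 2) sequentially"
    using \<open>e > 0\<close>
    by (intro eventually_conj bounds[OF \<delta>(1)] tendstoD[OF lo[OF \<delta>(1)]] tendstoD[OF up[OF \<delta>(1)]])
      simp_all
  then show "eventually (\<lambda>T. dist (f T) L < e) sequentially"
  proof eventually_elim
    case (elim T)
    then show ?case using \<delta> unfolding dist_real_def abs_less_iff by linarith
  qed
qed

lemma (in prob_space) prob_Ioc_eq_diff: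
  fixes W :: "'a \<Rightarrow> real"
  assumes [measurable]: "W \<in> borel_measurable M" and "x \<le> y"
  shows "prob {\<omega>\<in>space M. x < W \<omega> \<and> W \<omega> \<le> y}
    = prob {\<omega>\<in>space M. W \<omega> \<le> y} - prob {\<omega>\<in>space M. W \<omega> \<le> x}"
proof -
  have "{\<omega>\<in>space M. x < W \<omega> \<and> W \<omega> \<le> y}
      = {\<omega>\<in>space M. W \<omega> \<le> y} - {\<omega>\<in>space M. W \<omega> \<le> x}"
    by auto
  moreover have "{\<omega>\<in>space M. W \<omega> \<le> x} \<subseteq> {\<omega>\<in>space M. W \<omega> \<le> y}"
    using \<open>x \<le> y\<close> by auto
  ultimately show ?thesis by (simp add: finite_measure_Diff)
qed

lemma (in prob_space) prob_randomly_scaled_interval_le: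
  fixes W s :: "'a \<Rightarrow> real"
  assumes [measurable]: "W \<in> borel_measurable M" "s \<in> borel_measurable M"
    and "0 < \<sigma>" "0 < \<delta>" "a \<le> 0" "0 \<le> b"
  shows "prob {\<omega>\<in>space M. s \<omega> * a \<le> W \<omega> \<and> W \<omega> \<le> s \<omega> * b}
    \<le> prob {\<omega>\<in>space M. W \<omega> \<le> (\<sigma> + \<delta>) * b} - prob {\<omega>\<in>space M. W \<omega> \<le> (\<sigma> + \<delta>) * a - \<delta>}
      + prob {\<omega>\<in>space M. \<delta> < \<bar>s \<omega> - \<sigma>\<bar>}"
proof -
  let ?I = "{\<omega>\<in>space M. (\<sigma> + \<delta>) * a - \<delta> < W \<omega> \<and> W \<omega> \<le> (\<sigma> + \<delta>) * b}"
  let ?B = "{\<omega>\<in>space M. \<delta> < \<bar>s \<omega> - \<sigma>\<bar>}"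
  have "{\<omega>\<in>space M. s \<omega> * a \<le> W \<omega> \<and> W \<omega> \<le> s \<omega> * b} \<subseteq> ?I \<union> ?B"
  proof (intro subsetI UnCI)
    fix \<omega> assume \<omega>: "\<omega> \<in> {\<omega>\<in>space M. s \<omega> * a \<le> W \<omega> \<and> W \<omega> \<le> s \<omega> * b}" and "\<omega> \<notin> ?B"
    then have "s \<omega> \<le> \<sigma> + \<delta>" by auto
    then have "(\<sigma> + \<delta>) * a \<le> s \<omega> * a" "s \<omega> * b \<le> (\<sigma> + \<delta>) * b"
      using \<open>a \<le> 0\<close> \<open>0 \<le> b\<close> by (auto intro: mult_right_mono_neg mult_right_mono)
    then show "\<omega> \<in> ?I" using \<omega> \<open>0 < \<delta>\<close> by auto
  qed
  then have "prob {\<omega>\<in>space M. s \<omega> * a \<le> W \<omega> \<and> W \<omega> \<le> s \<omega> * b} \<le> prob (?I \<union> ?B)"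
    by (rule finite_measure_mono) simp
  also have "\<dots> \<le> prob ?I + prob ?B"
    by (rule measure_subadditive) (simp_all add: emeasure_eq_measure)
  also have "prob ?I = prob {\<omega>\<in>space M. W \<omega> \<le> (\<sigma> + \<delta>) * b} - prob {\<omega>\<in>space M. W \<omega> \<le> (\<sigma> + \<delta>) * a - \<delta>}"
  proof (rule prob_Ioc_eq_diff)
    have "(\<sigma> + \<delta>) * a \<le> 0" "0 \<le> (\<sigma> + \<delta>) * b"
      using assms(3-6) by (simp_all add: mult_nonneg_nonpos)
    then show "(\<sigma> + \<delta>) * a - \<delta> \<le> (\<sigma> + \<delta>) * b" using \<open>0 < \<delta>\<close> by linarith
  qed simp
  finally show ?thesis .
qed

lemma (in prob_space) prob_randomly_scaled_interval_ge:
  fixes W s :: "'a \<Rightarrow> real"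
  assumes [measurable]: "W \<in> borel_measurable M" "s \<in> borel_measurable M"
    and "\<delta> < \<sigma>" "a \<le> 0" "0 \<le> b"
  shows "prob {\<omega>\<in>space M. W \<omega> \<le> (\<sigma> - \<delta>) * b} - prob {\<omega>\<in>space M. W \<omega> \<le> (\<sigma> - \<delta>) * a}
      - prob {\<omega>\<in>space M. \<delta> < \<bar>s \<omega> - \<sigma>\<bar>}
    \<le> prob {\<omega>\<in>space M. s \<omega> * a \<le> W \<omega> \<and> W \<omega> \<le> s \<omega> * b}"
proof -
  let ?E = "{\<omega>\<in>space M. s \<omega> * a \<le> W \<omega> \<and> W \<omega> \<le> s \<omega> * b}"
  let ?B = "{\<omega>\<in>space M. \<delta> < \<bar>s \<omega> - \<sigma>\<bar>}"
  have "(\<sigma> - \<delta>) * a \<le> (\<sigma> - \<delta>) * b"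
    using assms(3-5) by (intro mult_left_mono) auto
  then have "prob {\<omega>\<in>space M. W \<omega> \<le> (\<sigma> - \<delta>) * b} - prob {\<omega>\<in>space M. W \<omega> \<le> (\<sigma> - \<delta>) * a}
      = prob {\<omega>\<in>space M. (\<sigma> - \<delta>) * a < W \<omega> \<and> W \<omega> \<le> (\<sigma> - \<delta>) * b}"
    by (simp add: prob_Ioc_eq_diff)
  also have "\<dots> \<le> prob (?E \<union> ?B)"
  proof (rule finite_measure_mono)
    show "{\<omega>\<in>space M. (\<sigma> - \<delta>) * a < W \<omega> \<and> W \<omega> \<le> (\<sigma> - \<delta>) * b} \<subseteq> ?E \<union> ?B"
    proof (intro subsetI UnCI)
      fix \<omega> assume \<omega>: "\<omega> \<in> {\<omega>\<in>space M. (\<sigma> - \<delta>) * a < W \<omega> \<and> W \<omega> \<le> (\<sigma> - \<delta>) * b}"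
        and "\<omega> \<notin> ?B"
      then have "\<sigma> - \<delta> \<le> s \<omega>" by auto
      then have "s \<omega> * a \<le> (\<sigma> - \<delta>) * a" "(\<sigma> - \<delta>) * b \<le> s \<omega> * b"
        using \<open>a \<le> 0\<close> \<open>0 \<le> b\<close> by (auto intro: mult_right_mono_neg mult_right_mono)
      then show "\<omega> \<in> ?E" using \<omega> by auto
    qed
  qed simp
  also have "\<dots> \<le> prob ?E + prob ?B"
    by (rule measure_subadditive) (simp_all add: emeasure_eq_measure)
  finally show ?thesis by simp
qed

text \<open>On the event \<open>\<bar>s - \<sigma>\<bar> \<le> \<delta>\<close> the random interval \<open>[s a, s b]\<close> lies between the deterministic
  intervals scaled by \<open>\<sigma> - \<delta>\<close> and \<open>\<sigma> + \<delta>\<close>; the limits of the resulting bounds tend to the claimed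
  value as \<open>\<delta> \<rightarrow> 0\<close> by continuity of \<open>G\<close>.\<close>
lemma (in prob_space) tendsto_prob_randomly_scaled_interval:
  fixes W s :: "nat \<Rightarrow> 'a \<Rightarrow> real" and G :: "real \<Rightarrow> real"
  assumes [measurable]: "\<And>T. W T \<in> borel_measurable M" "\<And>T. s T \<in> borel_measurable M"
    and W: "\<And>x. (\<lambda>T. prob {\<omega>\<in>space M. W T \<omega> \<le> x}) \<longlonglongrightarrow> G x" and G: "\<And>x. isCont G x"
    and s: "conv_in_prob M s (\<lambda>_. \<sigma>)" and "\<sigma> > 0" "a \<le> 0" "0 \<le> b"
  shows "(\<lambda>T. prob {\<omega>\<in>space M. s T \<omega> * a \<le> W T \<omega> \<and> W T \<omega> \<le> s T \<omega> * b})
    \<longlonglongrightarrow> G (\<sigma> * b) - G (\<sigma> * a)"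
proof -
  define F where "F T x = prob {\<omega>\<in>space M. W T \<omega> \<le> x}" for T x
  define B where "B \<delta> T = prob {\<omega>\<in>space M. \<delta> < \<bar>s T \<omega> - \<sigma>\<bar>}" for \<delta> T
  have B: "(\<lambda>T. B \<delta> T) \<longlonglongrightarrow> 0" if "0 < \<delta>" for \<delta>
    using s that unfolding conv_in_prob_def B_def by simp
  have G_at_0: "((\<lambda>\<delta>. G (f \<delta>)) \<longlongrightarrow> G (f 0)) (at_right 0)" if "continuous (at 0) f" for f
  proof (rule isCont_tendsto_compose[OF G])
    show "(f \<longlongrightarrow> f 0) (at_right 0)"
      using that unfolding continuous_at by (rule filterlim_mono[OF _ order_refl at_le]) simp
  qed
  show ?thesis
  proof (rule tendsto_of_approximating_bounds)
    show "at_right (0::real) \<noteq> bot" by simp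
    show "eventually (\<lambda>\<delta>. \<delta> \<in> {0<..<\<sigma>}) (at_right 0)"
      using \<open>\<sigma> > 0\<close> by (rule eventually_at_right_real)
    show "eventually (\<lambda>T. F T ((\<sigma> - \<delta>) * b) - F T ((\<sigma> - \<delta>) * a) - B \<delta> T
        \<le> prob {\<omega>\<in>space M. s T \<omega> * a \<le> W T \<omega> \<and> W T \<omega> \<le> s T \<omega> * b}
      \<and> prob {\<omega>\<in>space M. s T \<omega> * a \<le> W T \<omega> \<and> W T \<omega> \<le> s T \<omega> * b}
        \<le> F T ((\<sigma> + \<delta>) * b) - F T ((\<sigma> + \<delta>) * a - \<delta>) + B \<delta> T) sequentially"
      if "\<delta> \<in> {0<..<\<sigma>}" for \<delta>
      using that assms(6-8) unfolding F_def B_def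
      by (intro always_eventually allI conjI prob_randomly_scaled_interval_le
          prob_randomly_scaled_interval_ge) auto
    show "(\<lambda>T. F T ((\<sigma> - \<delta>) * b) - F T ((\<sigma> - \<delta>) * a) - B \<delta> T)
        \<longlonglongrightarrow> G ((\<sigma> - \<delta>) * b) - G ((\<sigma> - \<delta>) * a) - 0" if "\<delta> \<in> {0<..<\<sigma>}" for \<delta>
      using that unfolding F_def by (intro tendsto_diff W B) auto
    show "(\<lambda>T. F T ((\<sigma> + \<delta>) * b) - F T ((\<sigma> + \<delta>) * a - \<delta>) + B \<delta> T)
        \<longlonglongrightarrow> G ((\<sigma> + \<delta>) * b) - G ((\<sigma> + \<delta>) * a - \<delta>) + 0" if "\<delta> \<in> {0<..<\<sigma>}" for \<delta>
      using that unfolding F_def by (intro tendsto_add tendsto_diff W B) auto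
    show "((\<lambda>\<delta>. G ((\<sigma> - \<delta>) * b) - G ((\<sigma> - \<delta>) * a) - 0) \<longlongrightarrow> G (\<sigma> * b) - G (\<sigma> * a)) (at_right 0)"
      using G_at_0[of "\<lambda>\<delta>. (\<sigma> - \<delta>) * b"] G_at_0[of "\<lambda>\<delta>. (\<sigma> - \<delta>) * a"]
      by (simp add: continuous_intros tendsto_diff)
    show "((\<lambda>\<delta>. G ((\<sigma> + \<delta>) * b) - G ((\<sigma> + \<delta>) * a - \<delta>) + 0) \<longlongrightarrow> G (\<sigma> * b) - G (\<sigma> * a)) (at_right 0)"
      using G_at_0[of "\<lambda>\<delta>. (\<sigma> + \<delta>) * b"] G_at_0[of "\<lambda>\<delta>. (\<sigma> + \<delta>) * a - \<delta>"]
      by (simp add: continuous_intros tendsto_diff)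
  qed
qed

section \<open>Coverage of the interval centred at the data proxy\<close>

lemma sets_vimage_algebra_compose_subset:
  assumes X: "X \<in> M \<rightarrow>\<^sub>M N" and f: "f \<in> N \<rightarrow>\<^sub>M K"
  shows "sets (vimage_algebra (space M) (\<lambda>\<omega>. f (X \<omega>)) K) \<subseteq> sets (vimage_algebra (space M) X N)"
proof (rule sets_image_in_sets[OF space_vimage_algebra])
  have "X \<in> vimage_algebra (space M) X N \<rightarrow>\<^sub>M N"
    using measurable_space[OF X] by (intro measurable_vimage_algebra1) auto
  then show "(\<lambda>\<omega>. f (X \<omega>)) \<in> vimage_algebra (space M) X N \<rightarrow>\<^sub>M K"
    using f by (rule measurable_compose)
qed

lemma (in prob_space) indep_var_compose_if_indep_set_vimage_algebra:
  assumes X: "random_variable N X" and Y: "random_variable N' Y"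
    and f: "f \<in> N \<rightarrow>\<^sub>M K" and g: "g \<in> N' \<rightarrow>\<^sub>M K"
    and indep: "indep_set (sets (vimage_algebra (space M) X N)) (sets (vimage_algebra (space M) Y N'))"
  shows "indep_var K (\<lambda>\<omega>. f (X \<omega>)) K (\<lambda>\<omega>. g (Y \<omega>))"
proof -
  have "indep_set (sets (vimage_algebra (space M) (\<lambda>\<omega>. f (X \<omega>)) K))
      (sets (vimage_algebra (space M) (\<lambda>\<omega>. g (Y \<omega>)) K))"
    using indep unfolding indep_set_def
    by (rule indep_sets_mono_sets)
      (use sets_vimage_algebra_compose_subset[OF X f] sets_vimage_algebra_compose_subset[OF Y g]
        in \<open>auto split: bool.split\<close>)
  then show ?thesis
    using measurable_compose[OF X f] measurable_compose[OF Y g]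
    by (simp add: indep_var_eq sets_vimage_algebra)
qed

lemma (in prob_space) integral_cond_prob:
  assumes "subalgebra M F" "A \<in> events"
  shows "(\<integral>\<omega>. cond_prob M F A \<omega> \<partial>M) = prob A"
proof -
  interpret finite_measure_subalgebra M F
    by unfold_locales (rule assms(1))
  have "(\<integral>\<omega>. 1 * real_cond_exp M F (indicator A) \<omega> \<partial>M) = (\<integral>\<omega>. 1 * indicator A \<omega> \<partial>M)"
    using assms(2) by (intro real_cond_exp_intg(2)) (auto simp: emeasure_eq_measure)
  then show ?thesis
    unfolding cond_prob_def using assms(2) by simp
qed

lemma mem_centred_interval_iff:
  fixes q x h s u1 u2 :: real
  assumes "q > 0"
  shows "x \<in> {h - s / q * u1 .. h - s / q * u2} \<longleftrightarrow> s * - u1 \<le> q * (x - h) \<and> q * (x - h) \<le> s * - u2"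
  using assms by (auto simp: field_simps)

lemma (in prob_space) tendsto_prob_diff_le_if_indep_identical:
  fixes Y Y' :: "nat \<Rightarrow> 'a \<Rightarrow> real"
  assumes indep: "\<And>T. indep_var borel (Y' T) borel (Y T)"
    and same: "\<And>T. distr M borel (Y T) = distr M borel (Y' T)"
    and normal: "\<And>t. (\<lambda>T. char (distr M borel (Y T)) t) \<longlonglongrightarrow> complex_of_real (exp (- (\<sigma>\<^sup>2 * t\<^sup>2) / 2))"
    and "\<sigma> > 0"
  shows "(\<lambda>T. prob {\<omega>\<in>space M. Y T \<omega> - Y' T \<omega> \<le> x}) \<longlonglongrightarrow> cdf std_gauss (x / (sqrt 2 * \<sigma>))"
proof (rule tendsto_prob_le_if_tendsto_char_gauss)
  show "(\<lambda>\<omega>. Y T \<omega> - Y' T \<omega>) \<in> borel_measurable M" for T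
    using indep_var_rv1[OF indep] indep_var_rv2[OF indep] by measurable
  show "sqrt 2 * \<sigma> > 0" using \<open>\<sigma> > 0\<close> by simp
  fix t
  have "(\<lambda>T. char (distr M borel (Y T)) t * char (distr M borel (Y T)) (- t))
    \<longlonglongrightarrow> complex_of_real (exp (- (\<sigma>\<^sup>2 * t\<^sup>2) / 2)) * complex_of_real (exp (- (\<sigma>\<^sup>2 * (- t)\<^sup>2) / 2))"
    by (intro tendsto_mult normal)
  then show "(\<lambda>T. char (distr M borel (\<lambda>\<omega>. Y T \<omega> - Y' T \<omega>)) t)
    \<longlonglongrightarrow> complex_of_real (exp (- (sqrt 2 * \<sigma> * t)\<^sup>2 / 2))"
    by (simp add: char_distr_diff_indep_identical[OF indep same] power_mult_distrib
        flip: of_real_mult exp_add)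
qed

lemma (in prob_space) tendsto_prob_mem_centred_interval:
  fixes \<theta> \<theta>' s :: "nat \<Rightarrow> 'a \<Rightarrow> real"
  assumes [measurable]: "\<And>T. \<theta> T \<in> borel_measurable M" "\<And>T. s T \<in> borel_measurable M"
    and indep: "\<And>T. indep_var borel (\<theta>' T) borel (\<theta> T)"
    and same: "\<And>T. distr M borel (\<theta> T) = distr M borel (\<theta>' T)"
    and normal: "\<And>t. (\<lambda>T. char (distr M borel (\<lambda>\<omega>. sqrt (real T) * (\<theta> T \<omega> - \<theta>0))) t)
      \<longlonglongrightarrow> complex_of_real (exp (- (\<sigma>\<^sup>2 * t\<^sup>2) / 2))"
    and s: "conv_in_prob M s (\<lambda>_. \<sigma>)" and "\<sigma> > 0" "u2 \<le> 0" "0 \<le> u1"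
  shows "(\<lambda>T. prob {\<omega>\<in>space M. \<theta> T \<omega> \<in>
      {\<theta>' T \<omega> - s T \<omega> / sqrt (real T) * u1 .. \<theta>' T \<omega> - s T \<omega> / sqrt (real T) * u2}})
    \<longlonglongrightarrow> cdf std_gauss (u1 / sqrt 2) - cdf std_gauss (u2 / sqrt 2)"
proof -
  have [measurable]: "\<theta>' T \<in> borel_measurable M" for T
    using indep by (rule indep_var_rv1)
  define Y where "Y \<theta> T = (\<lambda>\<omega>. sqrt (real T) * (\<theta> T \<omega> - \<theta>0))" for \<theta> :: "nat \<Rightarrow> 'a \<Rightarrow> real" and T
  have [measurable]: "Y \<theta> T \<in> borel_measurable M" "Y \<theta>' T \<in> borel_measurable M" for T
    unfolding Y_def by measurable
  have "indep_var borel ((\<lambda>x. sqrt (real T) * (x - \<theta>0)) \<circ> \<theta>' T) borel ((\<lambda>x. sqrt (real T) * (x - \<theta>0)) \<circ> \<theta> T)" for T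
    by (rule indep_var_compose[OF indep]) auto
  then have indep_Y: "indep_var borel (Y \<theta>' T) borel (Y \<theta> T)" for T
    by (simp add: Y_def comp_def)
  have same_Y: "distr M borel (Y \<theta> T) = distr M borel (Y \<theta>' T)" for T
    using arg_cong[OF same[of T], of "\<lambda>N. distr N borel (\<lambda>x. sqrt (real T) * (x - \<theta>0))"]
    by (simp add: distr_distr comp_def Y_def)
  note W = tendsto_prob_diff_le_if_indep_identical[OF indep_Y same_Y normal[folded Y_def] \<open>\<sigma> > 0\<close>]
  have "(\<lambda>T. prob {\<omega>\<in>space M. s T \<omega> * - u1 \<le> Y \<theta> T \<omega> - Y \<theta>' T \<omega> \<and> Y \<theta> T \<omega> - Y \<theta>' T \<omega> \<le> s T \<omega> * - u2})
    \<longlonglongrightarrow> cdf std_gauss (\<sigma> * - u2 / (sqrt 2 * \<sigma>)) - cdf std_gauss (\<sigma> * - u1 / (sqrt 2 * \<sigma>))"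
    using W s \<open>\<sigma> > 0\<close> \<open>u2 \<le> 0\<close> \<open>0 \<le> u1\<close>
    by (intro tendsto_prob_randomly_scaled_interval[where G="\<lambda>x. cdf std_gauss (x / (sqrt 2 * \<sigma>))"])
      (auto intro!: continuous_intros isCont_o2[OF _ isCont_cdf_std_gauss])
  also have "cdf std_gauss (\<sigma> * - u2 / (sqrt 2 * \<sigma>)) - cdf std_gauss (\<sigma> * - u1 / (sqrt 2 * \<sigma>))
    = cdf std_gauss (u1 / sqrt 2) - cdf std_gauss (u2 / sqrt 2)"
    using \<open>\<sigma> > 0\<close> cdf_std_gauss_uminus[of "u1 / sqrt 2"] cdf_std_gauss_uminus[of "u2 / sqrt 2"]
    by simp
  finally show ?thesis
  proof (rule Lim_transform_eventually)
    have "prob {\<omega>\<in>space M. s T \<omega> * - u1 \<le> Y \<theta> T \<omega> - Y \<theta>' T \<omega> \<and> Y \<theta> T \<omega> - Y \<theta>' T \<omega> \<le> s T \<omega> * - u2} =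
      prob {\<omega>\<in>space M. \<theta> T \<omega> \<in> {\<theta>' T \<omega> - s T \<omega> / sqrt (real T) * u1 .. \<theta>' T \<omega> - s T \<omega> / sqrt (real T) * u2}}"
      if "T \<ge> 1" for T
      using that by (simp only: mem_centred_interval_iff Y_def real_sqrt_gt_0_iff) (simp add: algebra_simps)
    then show "\<forall>\<^sub>F T in sequentially.
      prob {\<omega>\<in>space M. s T \<omega> * - u1 \<le> Y \<theta> T \<omega> - Y \<theta>' T \<omega> \<and> Y \<theta> T \<omega> - Y \<theta>' T \<omega> \<le> s T \<omega> * - u2} =
      prob {\<omega>\<in>space M. \<theta> T \<omega> \<in> {\<theta>' T \<omega> - s T \<omega> / sqrt (real T) * u1 .. \<theta>' T \<omega> - s T \<omega> / sqrt (real T) * u2}}"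
      unfolding eventually_sequentially by blast
  qed
qed

theorem proposition1:
  fixes M :: "'a measure"
    and S :: "nat \<Rightarrow> 'b measure" and X :: "nat \<Rightarrow> 'a \<Rightarrow> 'b"
    and \<Theta> :: "(real ^ 'p) set" and \<theta>0 :: "real ^ 'p"
    and U :: "'a \<Rightarrow> real"
    and H :: "nat \<Rightarrow> 'b \<Rightarrow> real ^ 'p"
    and \<theta>b :: "nat \<Rightarrow> 'a \<Rightarrow> real ^ 'p"
    and \<xi> :: "'a \<Rightarrow> real ^ 'p" and Rb :: "nat \<Rightarrow> 'a \<Rightarrow> real ^ 'p"
    and \<Sigma> \<Sigma>h :: "real ^ 'p ^ 'p"
    and \<Sigma>hat :: "nat \<Rightarrow> 'a \<Rightarrow> real ^ 'p ^ 'p"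
    and \<alpha> :: real
    and F :: "nat \<Rightarrow> 'a measure" and k :: 'p
  assumes M: "prob_space M"
    and X_meas: "\<And>T. X T \<in> M \<rightarrow>\<^sub>M S T"
    and \<Theta>: "\<Theta> \<in> sets borel" and \<theta>0: "\<theta>0 \<in> \<Theta>"
    and U_unif: "distr M lborel U = uniform_measure lborel {0..1}"
    and U_indep: "\<And>T. prob_space.indep_set M (sets (vimage_algebra (space M) U borel)) (sets (vimage_algebra (space M) (X T) (S T)))"
    and H_meas: "\<And>T. H T \<in> S T \<rightarrow>\<^sub>M borel"
    and H_\<Theta>: "\<And>T x. x \<in> space (S T) \<Longrightarrow> H T x \<in> \<Theta>"
    and \<theta>b_meas: "\<And>T. \<theta>b T \<in> borel_measurable M"
    and \<theta>b_\<Theta>: "\<And>T \<omega>. \<omega> \<in> space M \<Longrightarrow> \<theta>b T \<omega> \<in> \<Theta>"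
    and \<theta>b_indep: "\<And>T. prob_space.indep_set M (sets (vimage_algebra (space M) (X T) (S T))) (sets (vimage_algebra (space M) (\<theta>b T) borel))"
    and \<theta>b_distr: "\<And>T. distr M borel (\<theta>b T) = distr M borel (\<lambda>\<omega>. H T (X T \<omega>))"
    and \<Sigma>h_sym: "transpose \<Sigma>h = \<Sigma>h"
    and \<Sigma>h_psd: "\<And>x. 0 \<le> x \<bullet> (\<Sigma>h *v x)"
    and \<Sigma>h_sq: "\<Sigma>h ** \<Sigma>h = \<Sigma>"
    and \<xi>_meas: "\<xi> \<in> borel_measurable M"
    and \<xi>_distr: "distr M borel \<xi> = gauss_vec 0 \<Sigma>h"
    and Rb_meas: "\<And>T. Rb T \<in> borel_measurable M"
    and Rb_small: "conv_in_prob M (\<lambda>T \<omega>. sqrt (real T) *\<^sub>R Rb T \<omega>) (\<lambda>\<omega>. 0)"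
    and decomp: "\<And>T \<omega>. T \<ge> 1 \<Longrightarrow> \<omega> \<in> space M \<Longrightarrow>
                   \<theta>b T \<omega> = \<theta>0 + (1 / sqrt (real T)) *\<^sub>R \<xi> \<omega> + Rb T \<omega>"
    and \<Sigma>hat_meas: "\<And>T. \<Sigma>hat T \<in> borel_measurable M"
    and \<Sigma>hat_conv: "conv_in_prob M \<Sigma>hat (\<lambda>\<omega>. \<Sigma>)"
    and \<alpha>: "0 < \<alpha>" "\<alpha> < 1"
    and F_sub: "\<And>T. subalgebra (vimage_algebra (space M) (X T) (S T)) (F T)"
    and \<Sigma>_kk_pos: "\<Sigma> $ k $ k > 0"
  shows
    "(\<exists>L. ((\<lambda>T. integral\<^sup>L M (cond_prob M (F T)
        {\<omega> \<in> space M. \<theta>b T \<omega> $ k \<in>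
           {H T (X T \<omega>) $ k - sqrt (\<Sigma>hat T \<omega> $ k $ k) / sqrt (real T) * normal_quantile (1 - \<alpha> / 2)
            .. H T (X T \<omega>) $ k - sqrt (\<Sigma>hat T \<omega> $ k $ k) / sqrt (real T) * normal_quantile (\<alpha> / 2)}}))
        \<longlonglongrightarrow> L) \<and> L < 1 - \<alpha>)
     \<and>
     ((\<lambda>T. integral\<^sup>L M (cond_prob M (F T)
        {\<omega> \<in> space M. \<theta>b T \<omega> $ k \<in>
           {H T (X T \<omega>) $ k - sqrt (2 / real T) * sqrt (\<Sigma>hat T \<omega> $ k $ k) * normal_quantile (1 - \<alpha> / 2)
            .. H T (X T \<omega>) $ k - sqrt (2 / real T) * sqrt (\<Sigma>hat T \<omega> $ k $ k) * normal_quantile (\<alpha> / 2)}}))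
        \<longlonglongrightarrow> 1 - \<alpha>)"
proof -
  interpret prob_space M by (rule M)
  note [measurable] = X_meas H_meas \<theta>b_meas \<Sigma>hat_meas
  define \<sigma> where "\<sigma> = sqrt (\<Sigma> $ k $ k)"
  have \<sigma>: "\<sigma> > 0" "\<sigma>\<^sup>2 = \<Sigma> $ k $ k" using \<Sigma>_kk_pos by (simp_all add: \<sigma>_def)
  define u where "u = normal_quantile (1 - \<alpha> / 2)"
  have u: "0 < u" "normal_quantile (\<alpha> / 2) = - u" "cdf std_gauss u = 1 - \<alpha> / 2"
    using \<alpha> normal_quantile_pos[of "1 - \<alpha> / 2"] normal_quantile_one_minus[of "1 - \<alpha> / 2"]
      cdf_std_gauss_normal_quantile[of "1 - \<alpha> / 2"] by (simp_all add: u_def)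
  have indep: "indep_var borel (\<lambda>\<omega>. H T (X T \<omega>) $ k) borel (\<lambda>\<omega>. \<theta>b T \<omega> $ k)" for T
    by (rule indep_var_compose_if_indep_set_vimage_algebra[OF X_meas _ _ _ \<theta>b_indep]) auto
  have same: "distr M borel (\<lambda>\<omega>. \<theta>b T \<omega> $ k) = distr M borel (\<lambda>\<omega>. H T (X T \<omega>) $ k)" for T
    using arg_cong[OF \<theta>b_distr[of T], of "\<lambda>N. distr N borel (\<lambda>v. v $ k)"]
    by (simp add: distr_distr comp_def)
  have normal: "(\<lambda>T. char (distr M borel (\<lambda>\<omega>. sqrt (real T) * (\<theta>b T \<omega> $ k - \<theta>0 $ k))) t)
      \<longlonglongrightarrow> complex_of_real (exp (- (\<sigma>\<^sup>2 * t\<^sup>2) / 2))" for t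
    using tendsto_char_if_asymptotically_gauss_vec[OF \<xi>_meas Rb_meas \<xi>_distr Rb_small decomp]
    by (simp add: \<Sigma>h_sym \<Sigma>h_sq \<sigma>)
  have s: "conv_in_prob M (\<lambda>T \<omega>. sqrt (\<Sigma>hat T \<omega> $ k $ k)) (\<lambda>_. \<sigma>)"
    unfolding \<sigma>_def by (rule conv_in_prob_compose_const[OF \<Sigma>hat_meas _ _ \<Sigma>hat_conv])
      (auto intro!: borel_measurable_continuous_onI continuous_intros)
  have "(\<lambda>\<omega>. \<theta>b T \<omega> $ k) \<in> borel_measurable M" "(\<lambda>\<omega>. sqrt (\<Sigma>hat T \<omega> $ k $ k)) \<in> borel_measurable M"
    for T by measurable
  note coverage = tendsto_prob_mem_centred_interval[OF this indep same normal s \<sigma>(1)]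
  have sub: "subalgebra M (F T)" for T
    using F_sub[of T] sets_image_in_sets[OF refl X_meas] unfolding subalgebra_def by auto
  have cond: "(\<lambda>T. \<integral>\<omega>. cond_prob M (F T) {\<omega>\<in>space M. \<theta>b T \<omega> $ k \<in> {a T \<omega> .. b T \<omega>}} \<omega> \<partial>M) \<longlonglongrightarrow> L"
    if "(\<lambda>T. prob {\<omega>\<in>space M. \<theta>b T \<omega> $ k \<in> {a T \<omega> .. b T \<omega>}}) \<longlonglongrightarrow> L"
      and [measurable]: "\<And>T. a T \<in> borel_measurable M" "\<And>T. b T \<in> borel_measurable M" for a b L
  proof -
    have "{\<omega>\<in>space M. \<theta>b T \<omega> $ k \<in> {a T \<omega> .. b T \<omega>}} \<in> events" for T
      unfolding atLeastAtMost_iff by measurable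
    then show ?thesis using that(1) by (simp only: integral_cond_prob[OF sub])
  qed
  show ?thesis (is "(\<exists>L. (?ci1 \<longlonglongrightarrow> L) \<and> _) \<and> (?ci2 \<longlonglongrightarrow> _)")
  proof (intro conjI exI)
    show "?ci1 \<longlonglongrightarrow> cdf std_gauss (u / sqrt 2) - cdf std_gauss (- u / sqrt 2)"
      by (rule cond) (use coverage[of "- u" u] u in \<open>simp add: u_def[symmetric]\<close>, measurable)
    have "cdf std_gauss (u / sqrt 2) < cdf std_gauss u" "cdf std_gauss (- u) < cdf std_gauss (- u / sqrt 2)"
      using u(1) by (simp_all add: cdf_std_gauss_less_iff field_simps)
    then show "cdf std_gauss (u / sqrt 2) - cdf std_gauss (- u / sqrt 2) < 1 - \<alpha>"
      using u(3) cdf_std_gauss_uminus[of u] by simp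
    have "sqrt (2 / real T) * s * v = s / sqrt (real T) * (sqrt 2 * v)" for T s v
      by (simp add: real_sqrt_divide)
    then show "?ci2 \<longlonglongrightarrow> 1 - \<alpha>"
      by (intro cond)
        (use coverage[of "sqrt 2 * - u" "sqrt 2 * u"] u cdf_std_gauss_uminus[of u]
          in \<open>simp add: u_def[symmetric]\<close>, measurable)
  qed
qed

end
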